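(* Let $\mathcal{X}=[0,1]^D$ and $f\in\mathcal{B}$. For any $N_1\in\mathbb{N}_{>0}$, any $\epsilon>0$, and any probability measure $\pi$ on $\mathcal{X}$, there exists a sampled network $\Phi$ with one hidden layer of $N_1$ neurons and ReLU activation such that $$\|f-\Phi\|_2^2=\int_{\mathcal{X}}|f(x)-\Phi(x)|^2\,d\pi(x)<\frac{(3+\epsilon)\|f\|_{\mathcal{B}}^2}{N_1}.$$
   Context: Let $\phi(t)=\max\{t,0\}$ (ReLU) and $\Omega=\mathbb{R}\times\mathbb{R}^D\times\mathbb{R}$. The Barron space is $\mathcal{B}=\{f\colon f(x)=\int_\Omega w_2\,\phi(\langle w_1,x\rangle-b)\,d\mu(b,w_1,w_2)\text{ for some probability measure }\mu\text{ on }\Omega,\ \|f\|_{\mathcal{B}}<\infty\}$, with Barron norm $\|f\|_{\mathcal{B}}=\inf_\mu\max_{(b,w_1,w_2)\in\mathrm{supp}(\mu)}|w_2|(\|w_1\|_1+|b|)$, the infimum over all $\mu$ representing $f$. A sampled network with one hidden layer of $N_1$ neurons and ReLU activation is a function $\Phi(x)=\sum_{i=1}^{N_1}w_{2,i}\,\phi(\langle w_{1,i},x\rangle-b_{1,i})-b_2$ where, for each $i$, there are points $x^{(1)}_i\neq x^{(2)}_i$ in $\mathcal{X}$ with $w_{1,i}=\frac{x^{(2)}_i-x^{(1)}_i}{\|x^{(2)}_i-x^{(1)}_i\|^2}$ and $b_{1,i}=\langle w_{1,i},x^{(1)}_i\rangle$ (Euclidean norm and inner product), and the output-layer coefficients $w_{2,i}\in\mathbb{R}$,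 $b_2\in\mathbb{R}$ are unrestricted. *)

theory Defs
  imports "HOL-Probability.Probability"
begin

definition relu :: "real \<Rightarrow> real" where
  "relu t = max t 0"

text \<open>The unit cube [0,1]^D, with D = CARD('d).\<close>
definition unit_cube :: "(real^'d) set" where
  "unit_cube = {x. \<forall>i. 0 \<le> x$i \<and> x$i \<le> 1}"

definition l1norm :: "real^'d \<Rightarrow> real" where
  "l1norm w = (\<Sum>i\<in>UNIV. \<bar>w$i\<bar>)"

definition msupp :: "'a::topological_space measure \<Rightarrow> 'a set" where
  "msupp \<mu> = {\<omega>. \<forall>U. open U \<and> \<omega> \<in> U \<longrightarrow> emeasure \<mu> U > 0}"

definition barron_represents ::
  "(real \<times> (real^'d) \<times> real) measure \<Rightarrow> (real^'d \<Rightarrow> real) \<Rightarrow> (real^'d) set \<Rightarrow> bool" where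
  "barron_represents \<mu> f X \<longleftrightarrow> prob_space \<mu> \<and> sets \<mu> = sets borel \<and>
     (\<forall>x\<in>X. integrable \<mu> (\<lambda>(b, w1, w2). w2 * relu (w1 \<bullet> x - b)) \<and>
             f x = (\<integral>\<omega>. (case \<omega> of (b, w1, w2) \<Rightarrow> w2 * relu (w1 \<bullet> x - b)) \<partial>\<mu>))"

definition barron_bounds :: "(real^'d \<Rightarrow> real) \<Rightarrow> (real^'d) set \<Rightarrow> real set" where
  "barron_bounds f X = {C. \<exists>\<mu>. barron_represents \<mu> f X \<and>
       (\<forall>(b, w1, w2)\<in>msupp \<mu>. \<bar>w2\<bar> * (l1norm w1 + \<bar>b\<bar>) \<le> C)}"

definition in_barron :: "(real^'d \<Rightarrow> real) \<Rightarrow> (real^'d) set \<Rightarrow> bool" where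
  "in_barron f X \<longleftrightarrow> barron_bounds f X \<noteq> {}"

definition barron_norm :: "(real^'d \<Rightarrow> real) \<Rightarrow> (real^'d) set \<Rightarrow> real" where
  "barron_norm f X = Inf (barron_bounds f X)"

definition sampled_network :: "(real^'d) set \<Rightarrow> nat \<Rightarrow> (real^'d \<Rightarrow> real) \<Rightarrow> bool" where
  "sampled_network X N \<Phi> \<longleftrightarrow>
     (\<exists>(x1 :: nat \<Rightarrow> real^'d) (x2 :: nat \<Rightarrow> real^'d) (w2 :: nat \<Rightarrow> real) (b2 :: real).
        (\<forall>i<N. x1 i \<in> X \<and> x2 i \<in> X \<and> x1 i \<noteq> x2 i) \<and>
        \<Phi> = (\<lambda>x. (\<Sum>i<N.
               (let w1 = (1 / (norm (x2 i - x1 i))\<^sup>2) *\<^sub>R (x2 i - x1 i);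
                    b1 = w1 \<bullet> x1 i
                in w2 i * relu (w1 \<bullet> x - b1))) - b2))"

end

theory Submission
  imports Defs
begin

(* Maurey's empirical method. Choose a representing measure mu whose support bound C is below
   3/2 times the Barron norm, so that C^2 < (3 + eps) ||f||^2. On the cube a neuron drawn from mu
   is an unbiased estimate of f bounded by C, so appending one more such neuron to a partial sum
   raises the expected squared L2(pi) error by at most its variance, hence by at most C^2 (Fubini);
   choosing each neuron below that average gives N neurons whose mean is within C^2/N of f.
   Finally, on [0,1]^D every ReLU neuron is a sampled neuron plus a constant: take x1 on the kink
   hyperplane inside the cube and x2 = x1 + s w for a small s > 0. *)

lemma square_le_of_abs_le: "\<bar>x\<bar> \<le> (y::real) \<Longrightarrow> x\<^sup>2 \<le> y\<^sup>2"
  by (meson abs_ge_zero order_trans power2_le_iff_abs_le)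

lemma abs_sum_deviation_le:
  fixes a :: "nat \<Rightarrow> real"
  assumes "\<And>i. i < k \<Longrightarrow> \<bar>a i\<bar> \<le> C" and "\<bar>m\<bar> \<le> C"
  shows "\<bar>\<Sum>i<k. a i - m\<bar> \<le> real k * (2 * C)"
proof -
  have "\<bar>\<Sum>i<k. a i - m\<bar> \<le> (\<Sum>i<k. \<bar>a i - m\<bar>)"
    by (rule sum_abs)
  also have "\<dots> \<le> (\<Sum>i<k. 2 * C)"
    using assms by (intro sum_mono) (smt (verit) lessThan_iff)
  finally show ?thesis by simp
qed

lemma (in prob_space) AE_exists_le_expectation:
  fixes F :: "'a \<Rightarrow> real"
  assumes "AE \<omega> in M. P \<omega>" and "integrable M F"
  shows "\<exists>\<omega>\<in>space M. P \<omega> \<and> F \<omega> \<le> expectation F"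
proof (rule ccontr)
  assume below_none: "\<not> ?thesis"
  have "AE \<omega> in M. expectation F < F \<omega>"
    using AE_space assms(1) by eventually_elim (use below_none in auto)
  then have "expectation (\<lambda>\<omega>. expectation F) < expectation F"
    using assms(2) by (intro integral_less_AE_space) (auto simp: emeasure_space_1)
  then show False by (simp add: prob_space)
qed

lemma (in prob_space) expectation_shifted_square_le:
  fixes g :: "'a \<Rightarrow> real"
  assumes [measurable]: "g \<in> borel_measurable M" and bound: "AE \<omega> in M. \<bar>g \<omega>\<bar> \<le> C"
  shows "expectation (\<lambda>\<omega>. (a + (g \<omega> - expectation g))\<^sup>2) \<le> a\<^sup>2 + C\<^sup>2"
proof -
  have int_g: "integrable M g"
    using bound by (intro integrable_const_bound[where B = C]) auto
  have bound2: "AE \<omega> in M. (g \<omega>)\<^sup>2 \<le> C\<^sup>2"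
    using bound by (auto elim!: eventually_mono intro: square_le_of_abs_le)
  then have int_g2: "integrable M (\<lambda>\<omega>. (g \<omega>)\<^sup>2)"
    by (intro integrable_const_bound[where B = "C\<^sup>2"]) auto
  have "expectation (\<lambda>\<omega>. (a + (g \<omega> - expectation g))\<^sup>2)
      = expectation (\<lambda>\<omega>. a\<^sup>2 + (g \<omega> - expectation g)\<^sup>2 + 2 * a * (g \<omega> - expectation g))"
    by (simp add: power2_sum)
  also have "\<dots> = a\<^sup>2 + variance g"
    using int_g int_g2 by (simp add: power2_diff prob_space)
  also have "\<dots> \<le> a\<^sup>2 + C\<^sup>2"
    using variance_eq[OF int_g int_g2] integral_le_const[OF int_g2 bound2]
    by (simp add: diff_le_eq add_increasing2)
  finally show ?thesis .
qed

lemma (in prob_space) abs_expectation_le: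
  fixes g :: "'a \<Rightarrow> real"
  assumes "g \<in> borel_measurable M" and "AE \<omega> in M. \<bar>g \<omega>\<bar> \<le> C"
  shows "\<bar>expectation g\<bar> \<le> C"
proof -
  have "\<bar>expectation g\<bar> \<le> expectation (\<lambda>\<omega>. \<bar>g \<omega>\<bar>)"
    by (rule integral_abs_bound)
  also have "\<dots> \<le> C"
    using assms by (intro integral_le_const integrable_const_bound[where B = C]) auto
  finally show ?thesis .
qed

lemma (in pair_prob_space) maurey_step:
  fixes h :: "'a \<Rightarrow> 'b \<Rightarrow> real" and T :: "'b \<Rightarrow> real"
  assumes h_meas[measurable]: "(\<lambda>(\<omega>, x). h \<omega> x) \<in> borel_measurable (M1 \<Otimes>\<^sub>M M2)"
    and h_bound: "AE \<omega> in M1. \<forall>x\<in>space M2. \<bar>h \<omega> x\<bar> \<le> C"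
    and T_meas[measurable]: "T \<in> borel_measurable M2"
    and T_bound: "\<forall>x\<in>space M2. \<bar>T x\<bar> \<le> K"
  shows "\<exists>\<omega>\<in>space M1. (\<forall>x\<in>space M2. \<bar>h \<omega> x\<bar> \<le> C) \<and>
    (\<integral>x. (T x + (h \<omega> x - (\<integral>\<eta>. h \<eta> x \<partial>M1)))\<^sup>2 \<partial>M2) \<le> (\<integral>x. (T x)\<^sup>2 \<partial>M2) + C\<^sup>2"
proof -
  define F where "F x = (\<integral>\<eta>. h \<eta> x \<partial>M1)" for x
  define H where "H \<omega> x = (T x + (h \<omega> x - F x))\<^sup>2" for \<omega> x
  have h_bound_at: "AE \<omega> in M1. \<bar>h \<omega> x\<bar> \<le> C" if "x \<in> space M2" for x
    using h_bound that by (auto elim!: eventually_mono)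
  have F_meas[measurable]: "F \<in> borel_measurable M2"
    unfolding F_def by (rule M1.borel_measurable_lebesgue_integral) measurable
  have F_bound: "\<bar>F x\<bar> \<le> C" if "x \<in> space M2" for x
    unfolding F_def using that h_bound_at[OF that] by (intro M1.abs_expectation_le) measurable
  have H_bound: "AE p in M1 \<Otimes>\<^sub>M M2. \<bar>H (fst p) (snd p)\<bar> \<le> (K + 2 * C)\<^sup>2"
  proof (rule AE_pair_measure)
    show "{p \<in> space (M1 \<Otimes>\<^sub>M M2). \<bar>H (fst p) (snd p)\<bar> \<le> (K + 2 * C)\<^sup>2} \<in> sets (M1 \<Otimes>\<^sub>M M2)"
      unfolding H_def by measurable
    have H_le: "\<bar>H \<omega> x\<bar> \<le> (K + 2 * C)\<^sup>2" if "x \<in> space M2" "\<bar>h \<omega> x\<bar> \<le> C" for \<omega> x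
      unfolding H_def abs_power2 using T_bound F_bound[of x] that
      by (intro square_le_of_abs_le) (auto simp: abs_le_iff)
    show "AE \<omega> in M1. AE x in M2. \<bar>H (fst (\<omega>, x)) (snd (\<omega>, x))\<bar> \<le> (K + 2 * C)\<^sup>2"
      using h_bound by eventually_elim (use H_le in auto)
  qed
  have H_int: "integrable (M1 \<Otimes>\<^sub>M M2) (\<lambda>(\<omega>, x). H \<omega> x)"
    using H_bound unfolding H_def by (intro P.integrable_const_bound) (auto simp: case_prod_beta)
  obtain \<omega> where \<omega>: "\<omega> \<in> space M1" "\<forall>x\<in>space M2. \<bar>h \<omega> x\<bar> \<le> C"
    and below: "(\<integral>x. H \<omega> x \<partial>M2) \<le> (\<integral>\<omega>. (\<integral>x. H \<omega> x \<partial>M2) \<partial>M1)"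
    using M1.AE_exists_le_expectation[OF h_bound integrable_fst'[OF H_int]] by auto
  have "(\<integral>\<omega>. (\<integral>x. H \<omega> x \<partial>M2) \<partial>M1) = (\<integral>x. (\<integral>\<omega>. H \<omega> x \<partial>M1) \<partial>M2)"
    using Fubini_integral[OF H_int] by simp
  also have "\<dots> \<le> (\<integral>x. (T x)\<^sup>2 + C\<^sup>2 \<partial>M2)"
  proof (rule integral_mono)
    show "integrable M2 (\<lambda>x. \<integral>\<omega>. H \<omega> x \<partial>M1)"
      using integrable_snd[OF H_int] .
    show "integrable M2 (\<lambda>x. (T x)\<^sup>2 + C\<^sup>2)"
      using T_bound by (intro M2.integrable_const_bound[where B = "K\<^sup>2 + C\<^sup>2"])
        (auto simp: square_le_of_abs_le)
    show "(\<integral>\<omega>. H \<omega> x \<partial>M1) \<le> (T x)\<^sup>2 + C\<^sup>2" if "x \<in> space M2" for x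
      unfolding H_def F_def using that h_bound_at[OF that]
      by (intro M1.expectation_shifted_square_le) measurable
  qed
  also have "\<dots> = (\<integral>x. (T x)\<^sup>2 \<partial>M2) + C\<^sup>2"
    using T_bound
    by (subst Bochner_Integration.integral_add)
       (auto intro!: M2.integrable_const_bound[where B = "K\<^sup>2"] simp: square_le_of_abs_le M2.prob_space)
  finally show ?thesis
    using \<omega> below unfolding H_def F_def by (blast intro: order_trans)
qed

lemma (in pair_prob_space) maurey_sampling:
  fixes h :: "'a \<Rightarrow> 'b \<Rightarrow> real"
  assumes h_meas[measurable]: "(\<lambda>(\<omega>, x). h \<omega> x) \<in> borel_measurable (M1 \<Otimes>\<^sub>M M2)"
    and h_bound: "AE \<omega> in M1. \<forall>x\<in>space M2. \<bar>h \<omega> x\<bar> \<le> C"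
  shows "\<exists>\<omega>. (\<forall>i. \<omega> i \<in> space M1 \<and> (\<forall>x\<in>space M2. \<bar>h (\<omega> i) x\<bar> \<le> C)) \<and>
    integrable M2 (\<lambda>x. (\<Sum>i<k. h (\<omega> i) x - (\<integral>\<eta>. h \<eta> x \<partial>M1))\<^sup>2) \<and>
    (\<integral>x. (\<Sum>i<k. h (\<omega> i) x - (\<integral>\<eta>. h \<eta> x \<partial>M1))\<^sup>2 \<partial>M2) \<le> real k * C\<^sup>2"
proof -
  define F where "F x = (\<integral>\<eta>. h \<eta> x \<partial>M1)" for x
  have F_meas[measurable]: "F \<in> borel_measurable M2"
    unfolding F_def by (rule M1.borel_measurable_lebesgue_integral) measurable
  have F_bound: "\<bar>F x\<bar> \<le> C" if "x \<in> space M2" for x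
    unfolding F_def using that h_bound
    by (intro M1.abs_expectation_le) (measurable, auto elim!: eventually_mono)
  have error_meas: "(\<lambda>x. \<Sum>i<k. h (\<omega> i) x - F x) \<in> borel_measurable M2"
    if "\<forall>i. \<omega> i \<in> space M1" for k and \<omega> :: "nat \<Rightarrow> 'a"
  proof -
    have "(\<lambda>x. h (\<omega> i) x) \<in> borel_measurable M2" for i
      using measurable_compose[OF measurable_Pair1'[of "\<omega> i" M1 M2] h_meas] that by simp
    then show ?thesis by measurable
  qed
  have error_bound: "\<bar>\<Sum>i<k. h (\<omega> i) x - F x\<bar> \<le> real k * (2 * C)"
    if "\<forall>i. \<forall>x\<in>space M2. \<bar>h (\<omega> i) x\<bar> \<le> C" "x \<in> space M2" for k and \<omega> :: "nat \<Rightarrow> 'a" and x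
    using that F_bound by (intro abs_sum_deviation_le) auto
  have error_integrable: "integrable M2 (\<lambda>x. (\<Sum>i<k. h (\<omega> i) x - F x)\<^sup>2)"
    if "\<forall>i. \<omega> i \<in> space M1 \<and> (\<forall>x\<in>space M2. \<bar>h (\<omega> i) x\<bar> \<le> C)" for k and \<omega> :: "nat \<Rightarrow> 'a"
    using that error_meas[of \<omega> k] error_bound[of \<omega> _ k]
    by (intro M2.integrable_const_bound[where B = "(real k * (2 * C))\<^sup>2"])
       (auto simp: square_le_of_abs_le)
  have "\<exists>\<omega>. (\<forall>i. \<omega> i \<in> space M1 \<and> (\<forall>x\<in>space M2. \<bar>h (\<omega> i) x\<bar> \<le> C)) \<and>
    (\<integral>x. (\<Sum>i<k. h (\<omega> i) x - F x)\<^sup>2 \<partial>M2) \<le> real k * C\<^sup>2"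
  proof (induction k)
    case 0
    obtain \<omega> where "\<omega> \<in> space M1" "\<forall>x\<in>space M2. \<bar>h \<omega> x\<bar> \<le> C"
      using M1.AE_exists_le_expectation[OF h_bound, of "\<lambda>_. 0"] by auto
    then show ?case by (intro exI[of _ "\<lambda>_. \<omega>"]) auto
  next
    case (Suc k)
    then obtain \<omega> where \<omega>: "\<forall>i. \<omega> i \<in> space M1 \<and> (\<forall>x\<in>space M2. \<bar>h (\<omega> i) x\<bar> \<le> C)"
      and IH: "(\<integral>x. (\<Sum>i<k. h (\<omega> i) x - F x)\<^sup>2 \<partial>M2) \<le> real k * C\<^sup>2"
      by blast
    define T where "T x = (\<Sum>i<k. h (\<omega> i) x - F x)" for x
    obtain \<eta> where \<eta>: "\<eta> \<in> space M1" "\<forall>x\<in>space M2. \<bar>h \<eta> x\<bar> \<le> C"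
      and step: "(\<integral>x. (T x + (h \<eta> x - F x))\<^sup>2 \<partial>M2) \<le> (\<integral>x. (T x)\<^sup>2 \<partial>M2) + C\<^sup>2"
      using maurey_step[OF h_meas h_bound, of T "real k * (2 * C)"] \<omega> error_meas error_bound
      unfolding T_def F_def by blast
    define \<omega>' where "\<omega>' = fun_upd \<omega> k \<eta>"
    have "(\<Sum>i<Suc k. h (\<omega>' i) x - F x) = T x + (h \<eta> x - F x)" for x
      unfolding T_def \<omega>'_def by simp
    then have "(\<integral>x. (\<Sum>i<Suc k. h (\<omega>' i) x - F x)\<^sup>2 \<partial>M2) \<le> real (Suc k) * C\<^sup>2"
      using step IH unfolding T_def by (simp add: algebra_simps)
    moreover have "\<forall>i. \<omega>' i \<in> space M1 \<and> (\<forall>x\<in>space M2. \<bar>h (\<omega>' i) x\<bar> \<le> C)"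
      using \<omega> \<eta> unfolding \<omega>'_def by simp
    ultimately show ?case by blast
  qed
  then show ?thesis
    using error_integrable unfolding F_def by blast
qed

definition neuron :: "real \<times> 'a \<times> real \<Rightarrow> 'a::real_inner \<Rightarrow> real" where
  "neuron \<theta> x = (case \<theta> of (b, w, c) \<Rightarrow> c * relu (w \<bullet> x - b))"

definition sampled_neuron :: "'a::real_inner \<Rightarrow> 'a \<Rightarrow> 'a \<Rightarrow> real" where
  "sampled_neuron x1 x2 x = relu ((x2 - x1) \<bullet> (x - x1) / (norm (x2 - x1))\<^sup>2)"

lemma sampled_network_iff:
  "sampled_network X N \<Phi> \<longleftrightarrow>
     (\<exists>x1 x2 a b2. (\<forall>i<N. x1 i \<in> X \<and> x2 i \<in> X \<and> x1 i \<noteq> x2 i) \<and>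
        \<Phi> = (\<lambda>x. (\<Sum>i<N. a i * sampled_neuron (x1 i) (x2 i) x) - b2))"
  unfolding sampled_network_def sampled_neuron_def Let_def
  by (simp add: inner_diff_right diff_divide_distrib)

lemma relu_mult_nonneg: "0 \<le> k \<Longrightarrow> relu (k * y) = k * relu y"
  unfolding relu_def by (simp add: max_mult_distrib_left)

lemma sampled_neuron_along:
  assumes "x2 = x1 + s *\<^sub>R w" and "0 < s"
  shows "s * (norm w)\<^sup>2 * sampled_neuron x1 x2 x = relu (w \<bullet> x - w \<bullet> x1)"
proof (cases "w = 0")
  case True
  then show ?thesis by (simp add: relu_def)
next
  case False
  define k where "k = s * (norm w)\<^sup>2"
  have "k > 0" unfolding k_def using assms(2) False by simp
  have "(x2 - x1) \<bullet> (x - x1) / (norm (x2 - x1))\<^sup>2 = (w \<bullet> x - w \<bullet> x1) / k"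
    unfolding k_def using assms False by (simp add: inner_diff_right power2_eq_square field_simps)
  then have "k * sampled_neuron x1 x2 x = k * relu ((w \<bullet> x - w \<bullet> x1) / k)"
    unfolding sampled_neuron_def by simp
  also have "\<dots> = relu (k * ((w \<bullet> x - w \<bullet> x1) / k))"
    using \<open>k > 0\<close> by (rule relu_mult_nonneg[symmetric, OF less_imp_le])
  also have "\<dots> = relu (w \<bullet> x - w \<bullet> x1)"
    using \<open>k > 0\<close> by simp
  finally show ?thesis unfolding k_def .
qed

definition cube_min_corner :: "real^'d \<Rightarrow> real^'d" where
  "cube_min_corner w = (\<chi> i. if w$i < 0 then 1 else 0)"

definition cube_max_corner :: "real^'d \<Rightarrow> real^'d" where
  "cube_max_corner w = (\<chi> i. if 0 < w$i then 1 else 0)"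

lemma inner_cube_corner_bounds:
  assumes "x \<in> unit_cube"
  shows "w \<bullet> cube_min_corner w \<le> w \<bullet> x" and "w \<bullet> x \<le> w \<bullet> cube_max_corner w"
proof -
  have "0 \<le> x$i" "x$i \<le> 1" for i using assms by (auto simp: unit_cube_def)
  then have "w$i * cube_min_corner w $ i \<le> w$i * x$i" "w$i * x$i \<le> w$i * cube_max_corner w $ i" for i
    unfolding cube_min_corner_def cube_max_corner_def
    by (auto simp: mult_le_cancel_left1 mult_le_cancel_left2 mult_le_0_iff)
  then show "w \<bullet> cube_min_corner w \<le> w \<bullet> x" "w \<bullet> x \<le> w \<bullet> cube_max_corner w"
    by (auto simp: inner_vec_def intro!: sum_mono)
qed

lemma inner_cube_corner_diff: "w \<bullet> cube_max_corner w - w \<bullet> cube_min_corner w = l1norm w"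
  unfolding inner_vec_def l1norm_def cube_min_corner_def cube_max_corner_def sum_subtractf[symmetric]
  by (rule sum.cong) auto

lemma abs_inner_le_l1norm:
  assumes "x \<in> unit_cube"
  shows "\<bar>w \<bullet> x\<bar> \<le> l1norm w"
proof -
  have "\<bar>w \<bullet> x\<bar> \<le> (\<Sum>i\<in>UNIV. \<bar>w$i * x$i\<bar>)"
    unfolding inner_vec_def inner_real_def by (rule sum_abs)
  also have "\<dots> \<le> l1norm w"
    unfolding l1norm_def using assms
    by (intro sum_mono) (auto simp: unit_cube_def abs_mult mult_left_le)
  finally show ?thesis .
qed

lemma cube_level_segment:
  fixes w :: "real^'d"
  assumes "w \<bullet> cube_min_corner w \<le> \<beta>" and "\<beta> < w \<bullet> cube_max_corner w"
  shows "\<exists>x1 s. x1 \<in> unit_cube \<and> 0 < s \<and> x1 + s *\<^sub>R w \<in> unit_cube \<and> w \<bullet> x1 = \<beta>"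
proof -
  \<comment> \<open>On the diagonal from p to q the value of w \<bullet> x rises by l1norm w; at x1 = p + t(q - p)
      every coordinate still has room 1 - t in the direction of sgn (w$i).\<close>
  define p q where "p = cube_min_corner w" and "q = cube_max_corner w"
  define L where "L = l1norm w"
  have width: "w \<bullet> q - w \<bullet> p = L"
    unfolding p_def q_def L_def by (rule inner_cube_corner_diff)
  have "0 < L" using assms width unfolding p_def q_def by linarith
  define t where "t = (\<beta> - w \<bullet> p) / L"
  have "0 \<le> t" "t < 1"
    using assms \<open>0 < L\<close> width unfolding t_def p_def q_def by (auto simp: field_simps)
  define s where "s = (1 - t) / L"
  define x1 where "x1 = p + t *\<^sub>R (q - p)"
  have "0 < s" unfolding s_def using \<open>t < 1\<close> \<open>0 < L\<close> by simp
  have s_w: "s * \<bar>w$i\<bar> \<le> 1 - t" for i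
  proof -
    have "\<bar>w$i\<bar> \<le> L" unfolding L_def l1norm_def by (rule member_le_sum) auto
    then have "(1 - t) * \<bar>w$i\<bar> \<le> (1 - t) * L" using \<open>t < 1\<close> by (intro mult_left_mono) auto
    then show ?thesis unfolding s_def using \<open>0 < L\<close> by (simp add: field_simps)
  qed
  have x1_i: "x1$i = (if 0 < w$i then t else if w$i < 0 then 1 - t else 0)" for i
    unfolding x1_def p_def q_def cube_min_corner_def cube_max_corner_def by auto
  have "x1 \<in> unit_cube"
    unfolding unit_cube_def using x1_i \<open>0 \<le> t\<close> \<open>t < 1\<close> by auto
  moreover have "0 \<le> (x1 + s *\<^sub>R w)$i \<and> (x1 + s *\<^sub>R w)$i \<le> 1" for i
    using x1_i[of i] s_w[of i] \<open>0 \<le> t\<close> \<open>t < 1\<close>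
      mult_pos_neg[OF \<open>0 < s\<close>, of "w$i"] mult_pos_pos[OF \<open>0 < s\<close>, of "w$i"]
    by (auto simp: abs_if)
  then have "x1 + s *\<^sub>R w \<in> unit_cube"
    unfolding unit_cube_def by blast
  moreover have "w \<bullet> x1 = \<beta>"
    unfolding x1_def t_def using \<open>0 < L\<close> width
    by (simp add: inner_add_right inner_diff_right)
  ultimately show ?thesis using \<open>0 < s\<close> by blast
qed

lemma cube_zero_one:
  "(0 :: real^'d) \<in> unit_cube" "(\<chi> i. 1 :: real^'d) \<in> unit_cube" "(0 :: real^'d) \<noteq> (\<chi> i. 1)"
  by (auto simp: unit_cube_def vec_eq_iff)

lemma neuron_on_cube_eq_sampled:
  fixes \<theta> :: "real \<times> (real^'d) \<times> real"
  shows "\<exists>x1 x2 a d. x1 \<in> unit_cube \<and> x2 \<in> unit_cube \<and> x1 \<noteq> x2 \<and>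
    (\<forall>x\<in>unit_cube. neuron \<theta> x = a * sampled_neuron x1 x2 x + d)"
proof -
  obtain b w c where \<theta>: "\<theta> = (b, w, c)" by (cases \<theta>)
  define p q where "p = cube_min_corner w" and "q = cube_max_corner w"
  \<comment> \<open>A kink below the cube can be raised to the level w \<bullet> p: on the cube this shifts the
      neuron by a constant.\<close>
  define \<beta> where "\<beta> = max b (w \<bullet> p)"
  have on_cube: "w \<bullet> p \<le> w \<bullet> x" "w \<bullet> x \<le> w \<bullet> q" if "x \<in> unit_cube" for x
    unfolding p_def q_def using inner_cube_corner_bounds[OF that] by auto
  consider "\<beta> < w \<bullet> q" | "w \<bullet> q \<le> \<beta>" by linarith
  then show ?thesis
  proof cases
    case 1
    obtain x1 s where x1: "x1 \<in> unit_cube" "0 < s" "x1 + s *\<^sub>R w \<in> unit_cube" "w \<bullet> x1 = \<beta>"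
      using cube_level_segment[of w \<beta>] 1 unfolding \<beta>_def p_def q_def by auto
    have "w \<noteq> 0" using 1 unfolding \<beta>_def by auto
    then have "x1 \<noteq> x1 + s *\<^sub>R w" using \<open>0 < s\<close> by simp
    have "neuron \<theta> x = (c * s * (norm w)\<^sup>2) * sampled_neuron x1 (x1 + s *\<^sub>R w) x + c * (\<beta> - b)"
      if "x \<in> unit_cube" for x
    proof -
      have "relu (w \<bullet> x - b) = relu (w \<bullet> x - \<beta>) + (\<beta> - b)"
        using on_cube[OF that] unfolding \<beta>_def relu_def by auto
      also have "relu (w \<bullet> x - \<beta>) = s * (norm w)\<^sup>2 * sampled_neuron x1 (x1 + s *\<^sub>R w) x"
        using sampled_neuron_along[OF refl \<open>0 < s\<close>, of w x1 x] x1(4) by simp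
      finally have "relu (w \<bullet> x - b) = s * (norm w)\<^sup>2 * sampled_neuron x1 (x1 + s *\<^sub>R w) x + (\<beta> - b)" .
      then show ?thesis
        unfolding \<theta> neuron_def by (simp only: case_prod_conv) (simp add: algebra_simps)
    qed
    then show ?thesis using x1 \<open>x1 \<noteq> x1 + s *\<^sub>R w\<close> by blast
  next
    case 2
    have "neuron \<theta> x = 0 * sampled_neuron 0 (\<chi> i. 1) x + c * relu (w \<bullet> p - b)"
      if "x \<in> unit_cube" for x
      using on_cube[OF that] 2 unfolding \<theta> neuron_def \<beta>_def relu_def by auto
    then show ?thesis using cube_zero_one by blast
  qed
qed

lemma sampled_network_of_neurons:
  fixes \<theta> :: "nat \<Rightarrow> real \<times> (real^'d) \<times> real"
  shows "\<exists>\<Phi>. sampled_network unit_cube N \<Phi> \<and> (\<forall>x\<in>unit_cube. \<Phi> x = (\<Sum>i<N. neuron (\<theta> i) x))"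
proof -
  obtain x1 x2 a d where sampled: "\<And>i. x1 i \<in> unit_cube \<and> x2 i \<in> unit_cube \<and> x1 i \<noteq> x2 i \<and>
      (\<forall>x\<in>unit_cube. neuron (\<theta> i) x = a i * sampled_neuron (x1 i) (x2 i) x + d i)"
    using neuron_on_cube_eq_sampled[of "\<theta> _"] by metis
  define \<Phi> where "\<Phi> x = (\<Sum>i<N. a i * sampled_neuron (x1 i) (x2 i) x) - (- (\<Sum>i<N. d i))" for x
  have "sampled_network unit_cube N \<Phi>"
    unfolding sampled_network_iff \<Phi>_def using sampled by blast
  moreover have "\<Phi> x = (\<Sum>i<N. neuron (\<theta> i) x)" if "x \<in> unit_cube" for x
    unfolding \<Phi>_def using sampled that by (simp add: sum.distrib)
  ultimately show ?thesis by blast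
qed

lemma AE_in_msupp:
  fixes \<mu> :: "'a::second_countable_topology measure"
  assumes "sets \<mu> = sets borel"
  shows "AE \<omega> in \<mu>. \<omega> \<in> msupp \<mu>"
proof -
  define null_opens where "null_opens = {U. open U \<and> \<not> 0 < emeasure \<mu> U}"
  obtain \<U> where \<U>: "\<U> \<subseteq> null_opens" "countable \<U>" "\<Union>\<U> = \<Union>null_opens"
    using Lindelof[of null_opens] unfolding null_opens_def by blast
  have "\<Union>\<U> \<in> null_sets \<mu>"
  proof (rule null_sets_UN'[OF \<U>(2), of id, simplified])
    fix U assume "U \<in> \<U>"
    then have "open U" "emeasure \<mu> U = 0" using \<U>(1) unfolding null_opens_def by auto
    then show "U \<in> null_sets \<mu>" using assms by auto
  qed
  moreover have "- msupp \<mu> = \<Union>\<U>"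
    using \<U>(3) unfolding null_opens_def msupp_def by auto
  ultimately show ?thesis
    by (intro AE_I'[of "\<Union>\<U>"]) auto
qed

lemma abs_neuron_le:
  assumes "x \<in> unit_cube"
  shows "\<bar>neuron (b, w, c) x\<bar> \<le> \<bar>c\<bar> * (l1norm w + \<bar>b\<bar>)"
proof -
  have "\<bar>relu (w \<bullet> x - b)\<bar> \<le> l1norm w + \<bar>b\<bar>"
    using abs_inner_le_l1norm[OF assms, of w] unfolding relu_def by auto
  then show ?thesis unfolding neuron_def by (simp add: abs_mult mult_left_mono)
qed

lemma AE_abs_neuron_le:
  assumes "sets \<mu> = sets borel"
    and "\<forall>(b, w, c)\<in>msupp \<mu>. \<bar>c\<bar> * (l1norm w + \<bar>b\<bar>) \<le> C"
  shows "AE \<theta> in \<mu>. \<forall>x\<in>unit_cube. \<bar>neuron \<theta> x\<bar> \<le> C"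
  using AE_in_msupp[OF assms(1)]
proof eventually_elim
  case (elim \<theta>)
  obtain b w c where \<theta>: "\<theta> = (b, w, c)" by (cases \<theta>)
  show ?case
    using elim assms(2) abs_neuron_le[of _ b w c] unfolding \<theta> by (fastforce intro: order_trans)
qed

lemma barron_represents_eq_integral:
  "barron_represents \<mu> f X \<Longrightarrow> x \<in> X \<Longrightarrow> f x = (\<integral>\<theta>. neuron \<theta> x \<partial>\<mu>)"
  unfolding barron_represents_def neuron_def by blast

lemma abs_le_barron_bound:
  assumes "C \<in> barron_bounds f unit_cube" and "x \<in> unit_cube"
  shows "\<bar>f x\<bar> \<le> C"
proof -
  obtain \<mu> where rep: "barron_represents \<mu> f unit_cube"
    and bound: "\<forall>(b, w, c)\<in>msupp \<mu>. \<bar>c\<bar> * (l1norm w + \<bar>b\<bar>) \<le> C"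
    using assms(1) unfolding barron_bounds_def by blast
  then interpret prob_space \<mu> unfolding barron_represents_def by blast
  have "sets \<mu> = sets borel" using rep unfolding barron_represents_def by blast
  have "(\<lambda>\<theta>. neuron \<theta> x) \<in> borel_measurable \<mu>"
    using rep assms(2) unfolding barron_represents_def neuron_def by blast
  moreover have "AE \<theta> in \<mu>. \<bar>neuron \<theta> x\<bar> \<le> C"
    using AE_abs_neuron_le[OF \<open>sets \<mu> = sets borel\<close> bound] assms(2) by (auto elim!: eventually_mono)
  ultimately show ?thesis
    unfolding barron_represents_eq_integral[OF rep assms(2)] by (rule abs_expectation_le)
qed

lemma barron_norm_le_bound:
  assumes "C \<in> barron_bounds f unit_cube"
  shows "barron_norm f unit_cube \<le> C"
  unfolding barron_norm_def
proof (rule cInf_lower[OF assms])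
  show "bdd_below (barron_bounds f unit_cube)"
    using abs_le_barron_bound cube_zero_one(1) by (meson bdd_belowI)
qed

lemma abs_le_barron_norm:
  assumes "in_barron f unit_cube" and "x \<in> unit_cube"
  shows "\<bar>f x\<bar> \<le> barron_norm f unit_cube"
  using assms abs_le_barron_bound unfolding barron_norm_def in_barron_def by (blast intro: cInf_greatest)

lemma barron_bound_less:
  assumes "in_barron f X" and "barron_norm f X < C"
  shows "\<exists>C'\<in>barron_bounds f X. C' < C"
  using assms cInf_lessD unfolding barron_norm_def in_barron_def by blast

lemma measurable_ident_pair_restrict_space:
  "(\<lambda>p. p) \<in> borel \<Otimes>\<^sub>M restrict_space borel X \<rightarrow>\<^sub>M
     (borel :: ('a::second_countable_topology \<times> 'b::second_countable_topology) measure)"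
proof -
  have "(\<lambda>x. x) \<in> restrict_space borel X \<rightarrow>\<^sub>M (borel :: 'b measure)"
    by (rule measurable_restrict_space1) simp
  then have "snd \<in> borel \<Otimes>\<^sub>M restrict_space borel X \<rightarrow>\<^sub>M (borel :: 'b measure)"
    using measurable_comp[OF measurable_snd] by (auto simp: comp_def)
  then have "(\<lambda>p. (fst p, snd p)) \<in> borel \<Otimes>\<^sub>M restrict_space borel X \<rightarrow>\<^sub>M (borel :: 'a measure) \<Otimes>\<^sub>M borel"
    by (intro measurable_Pair measurable_fst'') simp_all
  then show ?thesis by (simp add: borel_prod)
qed

lemma borel_measurable_neuron_pair:
  fixes \<pi> :: "'a::euclidean_space measure"
  assumes "sets \<mu> = sets borel" and "sets \<pi> = sets (restrict_space borel X)"
  shows "(\<lambda>(\<theta>, x). neuron \<theta> x) \<in> borel_measurable (\<mu> \<Otimes>\<^sub>M \<pi>)"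
proof -
  have "continuous_on UNIV (\<lambda>p. neuron (fst p) (snd p))"
    unfolding neuron_def relu_def case_prod_beta by (intro continuous_intros)
  then have "(\<lambda>p. neuron (fst p) (snd p)) \<in> borel \<Otimes>\<^sub>M restrict_space borel X \<rightarrow>\<^sub>M borel"
    using measurable_comp[OF measurable_ident_pair_restrict_space borel_measurable_continuous_onI]
    by (simp add: comp_def)
  then show ?thesis
    unfolding case_prod_beta' measurable_cong_sets[OF sets_pair_measure_cong[OF assms] refl] .
qed

lemma barron_empirical_average:
  fixes f :: "real^'d \<Rightarrow> real" and \<pi> :: "(real^'d) measure"
  assumes "C \<in> barron_bounds f unit_cube"
    and "prob_space \<pi>" and "sets \<pi> = sets (restrict_space borel unit_cube)"
  shows "\<exists>\<omega>. integrable \<pi> (\<lambda>x. (\<Sum>i<N. neuron (\<omega> i) x - f x)\<^sup>2) \<and>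
           (\<integral>x. (\<Sum>i<N. neuron (\<omega> i) x - f x)\<^sup>2 \<partial>\<pi>) \<le> real N * C\<^sup>2"
proof -
  obtain \<mu> where rep: "barron_represents \<mu> f unit_cube"
    and bound: "\<forall>(b, w, c)\<in>msupp \<mu>. \<bar>c\<bar> * (l1norm w + \<bar>b\<bar>) \<le> C"
    using assms(1) unfolding barron_bounds_def by blast
  have "prob_space \<mu>" and sets_\<mu>: "sets \<mu> = sets borel"
    using rep unfolding barron_represents_def by blast+
  interpret pair_prob_space \<mu> \<pi>
    using \<open>prob_space \<mu>\<close> assms(2)
    by (simp add: pair_prob_space_def pair_sigma_finite_def prob_space_imp_sigma_finite)
  have space_\<pi>: "space \<pi> = unit_cube"
    using sets_eq_imp_space_eq[OF assms(3)] by (simp add: space_restrict_space)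
  have f_eq: "f x = (\<integral>\<theta>. neuron \<theta> x \<partial>\<mu>)" if "x \<in> space \<pi>" for x
    using barron_represents_eq_integral[OF rep] that space_\<pi> by simp
  obtain \<omega> where "integrable \<pi> (\<lambda>x. (\<Sum>i<N. neuron (\<omega> i) x - (\<integral>\<theta>. neuron \<theta> x \<partial>\<mu>))\<^sup>2)"
    and "(\<integral>x. (\<Sum>i<N. neuron (\<omega> i) x - (\<integral>\<theta>. neuron \<theta> x \<partial>\<mu>))\<^sup>2 \<partial>\<pi>) \<le> real N * C\<^sup>2"
    using maurey_sampling[OF borel_measurable_neuron_pair[OF sets_\<mu> assms(3)]]
      AE_abs_neuron_le[OF sets_\<mu> bound] unfolding space_\<pi> by blast
  then show ?thesis
    using f_eq by (auto cong: Bochner_Integration.integral_cong Bochner_Integration.integrable_cong)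
qed

lemma barron_sampled_approximation:
  fixes f :: "real^'d \<Rightarrow> real" and \<pi> :: "(real^'d) measure"
  assumes "C \<in> barron_bounds f unit_cube" and "0 < N"
    and "prob_space \<pi>" and "sets \<pi> = sets (restrict_space borel unit_cube)"
  shows "\<exists>\<Phi>. sampled_network unit_cube N \<Phi> \<and> integrable \<pi> (\<lambda>x. (f x - \<Phi> x)\<^sup>2) \<and>
           (\<integral>x. (f x - \<Phi> x)\<^sup>2 \<partial>\<pi>) \<le> C\<^sup>2 / real N"
proof -
  obtain \<omega> where U_int: "integrable \<pi> (\<lambda>x. (\<Sum>i<N. neuron (\<omega> i) x - f x)\<^sup>2)"
    and U_le: "(\<integral>x. (\<Sum>i<N. neuron (\<omega> i) x - f x)\<^sup>2 \<partial>\<pi>) \<le> real N * C\<^sup>2"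
    using barron_empirical_average[OF assms(1,3,4)] by blast
  define U where "U x = (\<Sum>i<N. neuron (\<omega> i) x - f x)" for x
  define \<theta> where "\<theta> i = (fst (\<omega> i), fst (snd (\<omega> i)), snd (snd (\<omega> i)) / real N)" for i
  obtain \<Phi> where "sampled_network unit_cube N \<Phi>"
    and \<Phi>: "\<forall>x\<in>unit_cube. \<Phi> x = (\<Sum>i<N. neuron (\<theta> i) x)"
    using sampled_network_of_neurons by blast
  have "neuron (\<theta> i) x = neuron (\<omega> i) x / real N" for i x
    unfolding \<theta>_def neuron_def by (simp add: case_prod_beta')
  then have "\<Phi> x = (\<Sum>i<N. neuron (\<omega> i) x) / real N" if "x \<in> unit_cube" for x
    using \<Phi> that by (simp add: sum_divide_distrib)
  then have "f x - \<Phi> x = - U x / real N" if "x \<in> unit_cube" for x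
    using that \<open>0 < N\<close> by (simp add: U_def sum_subtractf field_simps)
  then have error: "(f x - \<Phi> x)\<^sup>2 = (U x)\<^sup>2 / (real N)\<^sup>2" if "x \<in> space \<pi>" for x
    using that sets_eq_imp_space_eq[OF assms(4)] by (simp add: space_restrict_space power_divide)
  have "integrable \<pi> (\<lambda>x. (f x - \<Phi> x)\<^sup>2)"
    using U_int error unfolding U_def by (simp cong: Bochner_Integration.integrable_cong)
  moreover have "(\<integral>x. (f x - \<Phi> x)\<^sup>2 \<partial>\<pi>) = (\<integral>x. (U x)\<^sup>2 \<partial>\<pi>) / (real N)\<^sup>2"
    using error by (simp cong: Bochner_Integration.integral_cong)
  moreover have "\<dots> \<le> C\<^sup>2 / real N"
    using U_le \<open>0 < N\<close> unfolding U_def by (simp add: divide_le_eq power2_eq_square field_simps)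
  ultimately show ?thesis using \<open>sampled_network unit_cube N \<Phi>\<close> by auto
qed

theorem theorem2:
  fixes f :: "real^'d \<Rightarrow> real" and N1 :: nat and \<epsilon> :: real
    and \<pi> :: "(real^'d) measure"
  assumes "in_barron f unit_cube"
    and "\<exists>x\<in>unit_cube. f x \<noteq> 0"
    and "N1 > 0" and "\<epsilon> > 0"
    and "prob_space \<pi>" and "sets \<pi> = sets (restrict_space borel unit_cube)"
  shows "\<exists>\<Phi>. sampled_network unit_cube N1 \<Phi> \<and>
           integrable \<pi> (\<lambda>x. (f x - \<Phi> x)\<^sup>2) \<and>
           (\<integral>x. (f x - \<Phi> x)\<^sup>2 \<partial>\<pi>) < (3 + \<epsilon>) * (barron_norm f unit_cube)\<^sup>2 / real N1"
proof -
  define n where "n = barron_norm f unit_cube"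
  have "0 < n"
    using assms(2) abs_le_barron_norm[OF assms(1)] unfolding n_def by force
  then obtain C where C: "C \<in> barron_bounds f unit_cube" "C < 3 / 2 * n"
    using barron_bound_less[OF assms(1), of "3 / 2 * n"] unfolding n_def by auto
  have "n \<le> C" using barron_norm_le_bound[OF C(1)] unfolding n_def .
  have "C\<^sup>2 < (3 + \<epsilon>) * n\<^sup>2"
  proof -
    have "C\<^sup>2 < (3 / 2 * n)\<^sup>2"
      using C(2) \<open>0 < n\<close> \<open>n \<le> C\<close> by (intro power_strict_mono) auto
    also have "\<dots> = 9 / 4 * n\<^sup>2"
      by (simp add: power_mult_distrib power_divide)
    also have "\<dots> < (3 + \<epsilon>) * n\<^sup>2"
      using \<open>0 < n\<close> \<open>\<epsilon> > 0\<close> by (intro mult_strict_right_mono) auto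
    finally show ?thesis .
  qed
  then have "C\<^sup>2 / real N1 < (3 + \<epsilon>) * n\<^sup>2 / real N1"
    using \<open>N1 > 0\<close> by (simp add: divide_strict_right_mono)
  then show ?thesis
    using barron_sampled_approximation[OF C(1) assms(3,5,6)] unfolding n_def by force
qed

end
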